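(* Let $d\ge2$, $x\in\mathbb{R}^d$, $\theta\in\{\pm1\}^d$, $p := |\{l:\theta_l=1\}|-1$, and $v := x - \frac{\theta^\top x - p}{d}\theta$. Suppose $v\notin[0,1]^d$ and that there is exactly one index $i\in\{1,\dots,d\}$ with ($v_i>1$ and $\theta_i=1$) or ($v_i<0$ and $\theta_i=-1$). Set $\widetilde p := p-1$ if $v_i>1$ and $\widetilde p:=p$ if $v_i<0$. Let $\widetilde x$ and $\widetilde\theta$ be obtained from $x$ and $\theta$ by deleting the $i$-th component (keeping the original indices $j\neq i$), and let $\widetilde v := \widetilde x - \frac{\widetilde\theta^\top\widetilde x - \widetilde p}{d-1}\widetilde\theta$. Then for every $j\ne i$: (i) if $\theta_j = 1$ then $\widetilde v_j > v_j$; (ii) if $\theta_j=-1$ then $\widetilde v_j< v_j$. *)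

theory Defs
  imports Complex_Main
begin

text \<open>Vectors in R^d are represented as functions nat => real on the index set {1..d}.\<close>

definition shift_vec :: "nat set \<Rightarrow> (nat \<Rightarrow> real) \<Rightarrow> (nat \<Rightarrow> real) \<Rightarrow> real \<Rightarrow> nat \<Rightarrow> real" where
  "shift_vec I x \<theta> p l = x l - ((\<Sum>k\<in>I. \<theta> k * x k) - p) / real (card I) * \<theta> l"

definition p_of :: "nat \<Rightarrow> (nat \<Rightarrow> real) \<Rightarrow> real" where
  "p_of d \<theta> = real (card {l\<in>{1..d}. \<theta> l = 1}) - 1"

end

theory Submission
  imports Defs
begin

(* Both v and the reduced vector are x shifted along \<theta> by a scalar coefficient, so the
   claim says that deleting i lowers that coefficient. As \<theta> i ^ 2 = 1, \<theta> i * x i is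
   \<theta> i * v i + c, hence the new coefficient is c - (\<theta> i * v i - (p - p')) / (d - 1),
   and the violated bound at i makes the numerator positive: it is v i - 1 if v i > 1 and
   - v i if v i < 0. *)

definition shift_coeff :: "nat set \<Rightarrow> (nat \<Rightarrow> real) \<Rightarrow> (nat \<Rightarrow> real) \<Rightarrow> real \<Rightarrow> real" where
  "shift_coeff I x \<theta> p = ((\<Sum>k\<in>I. \<theta> k * x k) - p) / real (card I)"

lemma shift_vec_eq_coeff: "shift_vec I x \<theta> p l = x l - shift_coeff I x \<theta> p * \<theta> l"
  unfolding shift_vec_def shift_coeff_def by simp

lemma shift_coeff_remove:
  assumes "finite I" "i \<in> I" "card I \<ge> 2" "\<theta> i = 1 \<or> \<theta> i = -1"
  shows "shift_coeff (I - {i}) x \<theta> q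
    = shift_coeff I x \<theta> p - (\<theta> i * shift_vec I x \<theta> p i - (p - q)) / real (card I - 1)"
proof -
  define c where "c = shift_coeff I x \<theta> p"
  define n where "n = real (card I)"
  have n_gt_1: "n > 1" using assms(3) unfolding n_def by simp
  have card_remove: "real (card (I - {i})) = n - 1"
    using assms(1-3) unfolding n_def by (simp add: of_nat_diff)
  have sum_eq: "(\<Sum>k\<in>I. \<theta> k * x k) = c * n + p"
    using n_gt_1 unfolding c_def n_def shift_coeff_def by simp
  have "\<theta> i * x i = \<theta> i * shift_vec I x \<theta> p i + c"
    using assms(4) unfolding shift_vec_eq_coeff c_def by (auto simp: algebra_simps)
  then have "(\<Sum>k\<in>I - {i}. \<theta> k * x k) - q
      = c * (n - 1) - (\<theta> i * shift_vec I x \<theta> p i - (p - q))"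
    using assms(1,2) sum_eq by (simp add: sum_diff1 algebra_simps)
  then have "shift_coeff (I - {i}) x \<theta> q
      = (c * (n - 1) - (\<theta> i * shift_vec I x \<theta> p i - (p - q))) / (n - 1)"
    unfolding shift_coeff_def card_remove by simp
  also have "\<dots> = c - (\<theta> i * shift_vec I x \<theta> p i - (p - q)) / (n - 1)"
    using n_gt_1 by (simp add: field_simps)
  finally show ?thesis
    using assms(3) unfolding c_def n_def by (simp add: of_nat_diff)
qed

lemma shift_vec_remove:
  assumes "finite I" "i \<in> I" "card I \<ge> 2" "\<theta> i = 1 \<or> \<theta> i = -1"
  shows "shift_vec (I - {i}) x \<theta> q l
    = shift_vec I x \<theta> p l + (\<theta> i * shift_vec I x \<theta> p i - (p - q)) / real (card I - 1) * \<theta> l"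
  unfolding shift_vec_eq_coeff[of "I - {i}"] shift_coeff_remove[of I i \<theta> x q p, OF assms]
  by (simp add: shift_vec_eq_coeff[of I x \<theta> p l] left_diff_distrib)

theorem theorem8:
  fixes d :: nat and x \<theta> :: "nat \<Rightarrow> real" and i :: nat
  assumes "d \<ge> 2"
    and "\<forall>l\<in>{1..d}. \<theta> l = 1 \<or> \<theta> l = -1"
    and "\<exists>l\<in>{1..d}. shift_vec {1..d} x \<theta> (p_of d \<theta>) l < 0
                      \<or> shift_vec {1..d} x \<theta> (p_of d \<theta>) l > 1"
    and "i \<in> {1..d}"
    and "(shift_vec {1..d} x \<theta> (p_of d \<theta>) i > 1 \<and> \<theta> i = 1)
         \<or> (shift_vec {1..d} x \<theta> (p_of d \<theta>) i < 0 \<and> \<theta> i = -1)"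
    and "\<forall>j\<in>{1..d}. ((shift_vec {1..d} x \<theta> (p_of d \<theta>) j > 1 \<and> \<theta> j = 1)
         \<or> (shift_vec {1..d} x \<theta> (p_of d \<theta>) j < 0 \<and> \<theta> j = -1)) \<longrightarrow> j = i"
  shows "\<forall>j\<in>{1..d} - {i}.
    (let v = shift_vec {1..d} x \<theta> (p_of d \<theta>);
         pt = (if v i > 1 then p_of d \<theta> - 1 else p_of d \<theta>);
         vt = shift_vec ({1..d} - {i}) x \<theta> pt
     in (\<theta> j = 1 \<longrightarrow> vt j > v j) \<and> (\<theta> j = -1 \<longrightarrow> vt j < v j))"
proof -
  define p where "p = p_of d \<theta>"
  define v where "v = shift_vec {1..d} x \<theta> p"
  define pt where "pt = (if v i > 1 then p - 1 else p)"
  define \<delta> where "\<delta> = (\<theta> i * v i - (p - pt)) / real (d - 1)"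
  have "\<theta> i * v i - (p - pt) > 0"
    using assms(5) unfolding pt_def v_def p_def by auto
  then have "\<delta> > 0" using assms(1) unfolding \<delta>_def by simp
  moreover have "shift_vec ({1..d} - {i}) x \<theta> pt j = v j + \<delta> * \<theta> j" for j
    using shift_vec_remove[of "{1..d}" i \<theta> x pt j p] assms(1,2,4)
    unfolding v_def \<delta>_def by simp
  ultimately show ?thesis
    unfolding Let_def v_def pt_def p_def by simp
qed

end
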